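(* In the hierarchical partition construction described in the context, with $|V|=n$, the number of distinct sets occurring in the partitions $\mathcal S_0,\mathcal S_1,\ldots$ is at most $2n-1$, and the number of unordered pairs $\{A,B\}$ of distinct such sets for which there is a level $j$ with $A,B\in\mathcal S_j$ and $A$ knows $B$ at level $j$ is at most $(2n-1)\lambda^{3+\eta}$.
   Context: Let $(V,d)$ be a finite metric space with $|V|=n\ge 2$ which is doubling with constant $\lambda$: for every $v\in V$ and $r>0$ the open ball $B_{2r}(v)=\{u:d(u,v)<2r\}$ is contained in the union of at most $\lambda$ open balls $B_r(w)$, $w\in V$. Fix an integer $\eta\ge2$ and a real $\tau$ with $1+\frac{1}{2^{\eta-1}-1}\le\tau\le 2^{\eta}$. For $L\subseteq V$ and $r>0$, a greedy partition of $L$ with parameter $r$ is obtained by: set $L_0=L$; while $L_i\ne\emptyset$ choose any $v_i\in L_i$, let $P_i=\{u\in L_i: d(u,v_i)<2^{-\eta-1}r\}$ with leader $v_i$, and set $L_{i+1}=L_i\setminus P_i$. Hierarchical partition construction: choose $r_0$ with $0<r_0<\min_{u\ne v}d(u,v)$ and put $r_j=\tau^j r_0$. Let $\mathcal S_0=\{\{v\}:v\in V\}$, the leader of $\{v\}$ being $v$. While $\mathcal S_j$ has more than one element: let $L_j$ be the set of leaders of the sets in $\mathcal S_j$, let $\mathcal S'_{j+1}$ be a greedy partition of $L_j$ with parameter $2r_{j+1}$, and let $\mathcal S_{j+1}$ consist, for each $P\in\mathcal S'_{j+1}$, of the set $\bigcup\{S\in\mathcal S_j:\mathrm{leader}(S)\in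 P\}$, whose leader is defined to be the leader of $P$. Each $\mathcal S_j$ is a partition of $V$. For $S,S'\in\mathcal S_j$, $S$ knows $S'$ (at level $j$) if there are $v\in S$, $u\in S'$ with $d(v,u)<r_j$. *)

theory Defs
  imports Complex_Main
begin

definition metric_on :: "'a set \<Rightarrow> ('a \<Rightarrow> 'a \<Rightarrow> real) \<Rightarrow> bool" where
  "metric_on V d \<longleftrightarrow>
     (\<forall>u\<in>V. \<forall>v\<in>V. d u v = 0 \<longleftrightarrow> u = v) \<and>
     (\<forall>u\<in>V. \<forall>v\<in>V. d u v = d v u) \<and>
     (\<forall>u\<in>V. \<forall>v\<in>V. \<forall>w\<in>V. d u w \<le> d u v + d v w)"

definition ball_on :: "'a set \<Rightarrow> ('a \<Rightarrow> 'a \<Rightarrow> real) \<Rightarrow> 'a \<Rightarrow> real \<Rightarrow> 'a set" where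
  "ball_on V d v r = {u \<in> V. d u v < r}"

definition doubling :: "'a set \<Rightarrow> ('a \<Rightarrow> 'a \<Rightarrow> real) \<Rightarrow> real \<Rightarrow> bool" where
  "doubling V d lam \<longleftrightarrow>
     (\<forall>v\<in>V. \<forall>r>0. \<exists>W. W \<subseteq> V \<and> real (card W) \<le> lam \<and>
        ball_on V d v (2*r) \<subseteq> (\<Union>w\<in>W. ball_on V d w r))"

text \<open>Greedy partition of L with parameter r: a list of (part, leader) pairs, produced by
  the greedy process (any choice of leaders).\<close>
inductive greedy_part :: "('a \<Rightarrow> 'a \<Rightarrow> real) \<Rightarrow> nat \<Rightarrow> real \<Rightarrow> 'a set \<Rightarrow> ('a set \<times> 'a) list \<Rightarrow> bool"
  for d :: "'a \<Rightarrow> 'a \<Rightarrow> real" and \<eta> :: nat and r :: real where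
  gp_Nil: "greedy_part d \<eta> r {} []"
| gp_Cons: "v \<in> L \<Longrightarrow> P = {u \<in> L. d u v < r / 2 ^ (\<eta> + 1)} \<Longrightarrow>
            greedy_part d \<eta> r (L - P) Ps \<Longrightarrow> greedy_part d \<eta> r L ((P, v) # Ps)"

text \<open>A run of the hierarchical partition construction. S j is the partition at level j,
  given as a set of (cluster, leader) pairs; m is the level where the while loop stops.
  r_j = tau^j * r0.\<close>
definition hier_run :: "('a \<Rightarrow> 'a \<Rightarrow> real) \<Rightarrow> nat \<Rightarrow> real \<Rightarrow> 'a set \<Rightarrow> real
    \<Rightarrow> (nat \<Rightarrow> ('a set \<times> 'a) set) \<Rightarrow> nat \<Rightarrow> bool" where
  "hier_run d \<eta> \<tau> V r0 S m \<longleftrightarrow>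
     S 0 = (\<lambda>v. ({v}, v)) ` V \<and>
     (\<forall>j<m. 1 < card (S j) \<and>
        (\<exists>Ps. greedy_part d \<eta> (2 * (\<tau> ^ Suc j * r0)) (snd ` S j) Ps \<and>
              S (Suc j) = (\<lambda>(P, v). (\<Union>{A. \<exists>l\<in>P. (A, l) \<in> S j}, v)) ` set Ps)) \<and>
     \<not> (1 < card (S m))"

definition knows :: "('a \<Rightarrow> 'a \<Rightarrow> real) \<Rightarrow> real \<Rightarrow> 'a set \<Rightarrow> 'a set \<Rightarrow> bool" where
  "knows d r A B \<longleftrightarrow> (\<exists>v\<in>A. \<exists>u\<in>B. d v u < r)"

end

theory Submission
  imports Defs "HOL-Library.Disjoint_Sets"
begin

text \<open>
  Both bounds are proved by combinatorics on the chain of partitions S_0, S_1, ..., S_m,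
  separated from the metric geometry.

  The partitions form a chain in which every block of S_(j+1) is a union of
  blocks of S_j. In such a chain a block that is new at level j+1 swallows at least two blocks
  of level j, so the number of distinct blocks is at most 2|S_0| - 1 = 2n - 1. Moreover, a
  block is present at an interval of levels; charging each knowing pair {A,B} to the level at
  which the first of A, B disappears bounds the number of pairs by (number of blocks) times
  (maximal number of blocks known by one block within a level).

  By induction over the levels, clusters of S_j have radius r_j/2 around their
  leaders and distinct leaders are r_j/2^\<eta> apart (this is where the lower bound on \<tau> is
  used). The leaders of the blocks known by A at level j therefore form an r_j/2^\<eta>-separated
  set inside a ball of radius 2r_j, so by the doubling property there are at most
  \<lambda>^(\<eta>+2) of them.
\<close>

lemma metric_zero: "metric_on V d \<Longrightarrow> u \<in> V \<Longrightarrow> d u u = 0"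
  unfolding metric_on_def by blast

lemma metric_sym: "metric_on V d \<Longrightarrow> u \<in> V \<Longrightarrow> v \<in> V \<Longrightarrow> d u v = d v u"
  unfolding metric_on_def by blast

lemma metric_triangle:
  "metric_on V d \<Longrightarrow> u \<in> V \<Longrightarrow> v \<in> V \<Longrightarrow> w \<in> V \<Longrightarrow> d u w \<le> d u v + d v w"
  unfolding metric_on_def by blast

locale doubling_metric =
  fixes V :: "'a set" and d :: "'a \<Rightarrow> 'a \<Rightarrow> real" and lam :: real
  assumes finite_V: "finite V" and metric: "metric_on V d" and doubling: "doubling V d lam"
begin

text \<open>Every ball needs at least one covering ball, so \<lambda> \<ge> 1.\<close>
lemma lam_ge_1:
  assumes "V \<noteq> {}" shows "1 \<le> lam"
proof -
  obtain v where v: "v \<in> V" using assms by blast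
  obtain W where W: "W \<subseteq> V" "real (card W) \<le> lam"
    "ball_on V d v (2*1) \<subseteq> (\<Union>w\<in>W. ball_on V d w 1)"
    using doubling v unfolding doubling_def by (meson zero_less_one)
  have "v \<in> ball_on V d v (2*1)" using v metric_zero[OF metric v] unfolding ball_on_def by simp
  then have "W \<noteq> {}" using W(3) by blast
  moreover have "finite W" using W(1) finite_V finite_subset by blast
  ultimately have "1 \<le> card W" by (simp add: Suc_le_eq card_gt_0_iff)
  then show ?thesis using W(2) by linarith
qed

lemma iterated_cover:
  assumes "a \<in> V" "0 < \<rho>"
  shows "\<exists>W\<subseteq>V. real (card W) \<le> lam ^ k \<and>
           ball_on V d a (2 ^ k * \<rho>) \<subseteq> (\<Union>w\<in>W. ball_on V d w \<rho>)"
  using assms(2)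
proof (induction k arbitrary: \<rho>)
  case 0
  show ?case using assms(1) by (intro exI[of _ "{a}"]) auto
next
  case (Suc k)
  obtain W where W: "W \<subseteq> V" "real (card W) \<le> lam ^ k"
    "ball_on V d a (2 ^ k * (2 * \<rho>)) \<subseteq> (\<Union>w\<in>W. ball_on V d w (2 * \<rho>))"
    using Suc.IH[of "2 * \<rho>"] Suc.prems by auto
  have "\<forall>w\<in>W. \<exists>X. X \<subseteq> V \<and> real (card X) \<le> lam \<and>
          ball_on V d w (2 * \<rho>) \<subseteq> (\<Union>x\<in>X. ball_on V d x \<rho>)"
    using doubling W(1) Suc.prems unfolding doubling_def by blast
  then obtain f where f: "\<And>w. w \<in> W \<Longrightarrow> f w \<subseteq> V \<and> real (card (f w)) \<le> lam \<and>
          ball_on V d w (2 * \<rho>) \<subseteq> (\<Union>x\<in>f w. ball_on V d x \<rho>)"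
    by metis
  have finite_W: "finite W" using W(1) finite_V finite_subset by blast
  have "real (card (\<Union>w\<in>W. f w)) \<le> (\<Sum>w\<in>W. real (card (f w)))"
    using card_UN_le[OF finite_W, of f] of_nat_mono by fastforce
  also have "\<dots> \<le> (\<Sum>w\<in>W. lam)" by (rule sum_mono) (use f in auto)
  also have "\<dots> = real (card W) * lam" by simp
  also have "\<dots> \<le> lam ^ k * lam"
    using W(2) lam_ge_1 assms(1) by (intro mult_right_mono) fastforce+
  finally have "real (card (\<Union>w\<in>W. f w)) \<le> lam ^ Suc k" by (simp add: mult.commute)
  moreover have "ball_on V d a (2 ^ Suc k * \<rho>) \<subseteq> (\<Union>x\<in>(\<Union>w\<in>W. f w). ball_on V d x \<rho>)"
    using W(3) f by (fastforce simp: mult.assoc mult.left_commute)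
  moreover have "(\<Union>w\<in>W. f w) \<subseteq> V" using f by blast
  ultimately show ?case by blast
qed

lemma ball_separated_le_1:
  assumes sep: "\<forall>q\<in>Q. \<forall>q'\<in>Q. q \<noteq> q' \<longrightarrow> 2 * \<rho> \<le> d q q'" and "w \<in> V"
  shows "card (Q \<inter> ball_on V d w \<rho>) \<le> 1"
proof -
  have "x = y" if "x \<in> Q \<inter> ball_on V d w \<rho>" "y \<in> Q \<inter> ball_on V d w \<rho>" for x y
  proof (rule ccontr)
    assume "x \<noteq> y"
    then have "2 * \<rho> \<le> d x y" using sep that by blast
    moreover have "x \<in> V" "y \<in> V" "d x w < \<rho>" "d y w < \<rho>"
      using that unfolding ball_on_def by auto
    moreover have "d x y \<le> d x w + d w y" "d w y = d y w"
      using metric_triangle[OF metric] metric_sym[OF metric] calculation \<open>w \<in> V\<close> by blast+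
    ultimately show False by linarith
  qed
  moreover have "finite (Q \<inter> ball_on V d w \<rho>)"
    using finite_V by (rule finite_subset[rotated]) (auto simp: ball_on_def)
  ultimately show ?thesis using card_le_Suc0_iff_eq by (metis One_nat_def)
qed

lemma packing:
  assumes "a \<in> V" "0 < \<rho>" and Q: "Q \<subseteq> ball_on V d a (2 ^ k * \<rho>)"
    and sep: "\<forall>q\<in>Q. \<forall>q'\<in>Q. q \<noteq> q' \<longrightarrow> 2 * \<rho> \<le> d q q'"
  shows "real (card Q) \<le> lam ^ k"
proof -
  obtain W where W: "W \<subseteq> V" "real (card W) \<le> lam ^ k"
    "ball_on V d a (2 ^ k * \<rho>) \<subseteq> (\<Union>w\<in>W. ball_on V d w \<rho>)"
    using iterated_cover[OF assms(1,2)] by blast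
  have finite_W: "finite W" using W(1) finite_V finite_subset by blast
  have "Q \<subseteq> (\<Union>w\<in>W. Q \<inter> ball_on V d w \<rho>)" using Q W(3) by blast
  then have "card Q \<le> card (\<Union>w\<in>W. Q \<inter> ball_on V d w \<rho>)"
    using finite_V by (intro card_mono) (auto simp: ball_on_def intro: finite_subset)
  also have "\<dots> \<le> (\<Sum>w\<in>W. card (Q \<inter> ball_on V d w \<rho>))" by (rule card_UN_le[OF finite_W])
  also have "\<dots> \<le> (\<Sum>w\<in>W. 1)" using W(1) ball_separated_le_1[OF sep] by (intro sum_mono) auto
  finally show ?thesis using W(2) by simp
qed

end

lemma greedy_part_union: "greedy_part d \<eta> r L Ps \<Longrightarrow> \<Union>(fst ` set Ps) = L"
  by (induction rule: greedy_part.induct) auto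

lemma greedy_part_block:
  assumes "greedy_part d \<eta> r L Ps" "metric_on V d" "L \<subseteq> V" "0 < r" "(P, v) \<in> set Ps"
  shows "v \<in> P \<and> P \<subseteq> L \<and> (\<forall>u\<in>P. d u v < r / 2 ^ (\<eta> + 1))"
  using assms(1,3,5)
proof (induction rule: greedy_part.induct)
  case (gp_Cons w L Q Ps)
  show ?case
  proof (cases "(P, v) = (Q, w)")
    case True
    have "d w w = 0" using metric_zero[OF assms(2)] gp_Cons by blast
    then show ?thesis using True gp_Cons.hyps(1,2) assms(4) by auto
  next
    case False
    then show ?thesis using gp_Cons by auto
  qed
qed simp

lemma greedy_part_separated:
  assumes "greedy_part d \<eta> r L Ps" "metric_on V d" "L \<subseteq> V" "0 < r"
    and "(P, v) \<in> set Ps" "(P', v') \<in> set Ps" "(P, v) \<noteq> (P', v')"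
  shows "P \<inter> P' = {} \<and> r / 2 ^ (\<eta> + 1) \<le> d v v'"
  using assms(1,3,5-7)
proof (induction arbitrary: P v P' v' rule: greedy_part.induct)
  case (gp_Cons w L Q Ps)
  have later: "P1 \<inter> Q = {} \<and> r / 2 ^ (\<eta> + 1) \<le> d w v1 \<and> r / 2 ^ (\<eta> + 1) \<le> d v1 w"
    if "(P1, v1) \<in> set Ps" for P1 v1
  proof -
    have "v1 \<in> P1" "P1 \<subseteq> L - Q"
      using greedy_part_block[OF gp_Cons.hyps(3) assms(2) _ assms(4) that] gp_Cons.prems(1) by auto
    moreover have "w \<in> V" "v1 \<in> V" using gp_Cons.hyps(1) gp_Cons.prems(1) calculation by auto
    ultimately show ?thesis
      using gp_Cons.hyps(2) metric_sym[OF assms(2)] by (auto simp: not_less)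
  qed
  show ?case
    using gp_Cons.prems later gp_Cons.IH[of P v P' v'] by (auto simp: Int_commute)
qed simp

locale coarsening_chain =
  fixes V :: "'a set" and C :: "nat \<Rightarrow> 'a set set" and m :: nat
  assumes finite_V: "finite V"
    and partition: "j \<le> m \<Longrightarrow> partition_on V (C j)"
    and coarsens: "j < m \<Longrightarrow> A \<in> C j \<Longrightarrow> \<exists>Y\<in>C (Suc j). A \<subseteq> Y"
begin

lemma block_subset: "j \<le> m \<Longrightarrow> A \<in> C j \<Longrightarrow> A \<subseteq> V"
  using partition_onD1[OF partition, of j] by blast

lemma block_nonempty: "j \<le> m \<Longrightarrow> A \<in> C j \<Longrightarrow> A \<noteq> {}"
  using partition_onD3[OF partition, of j] by blast

lemma blocks_finite: "j \<le> m \<Longrightarrow> finite (C j)"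
  by (meson PowI block_subset finite_Pow_iff finite_V finite_subset subsetI)

lemma blocks_overlap: "j \<le> m \<Longrightarrow> A \<in> C j \<Longrightarrow> B \<in> C j \<Longrightarrow> A \<inter> B \<noteq> {} \<Longrightarrow> A = B"
  using partition_onD2[OF partition, of j] unfolding disjoint_def by blast

lemma block_is_union:
  assumes "j < m" "Y \<in> C (Suc j)"
  shows "Y = \<Union>{A \<in> C j. A \<subseteq> Y}"
proof
  show "Y \<subseteq> \<Union>{A \<in> C j. A \<subseteq> Y}"
  proof
    fix x assume "x \<in> Y"
    then have "x \<in> V" using block_subset[of "Suc j" Y] assms by auto
    then obtain A where A: "A \<in> C j" "x \<in> A" using partition_onD1[OF partition, of j] assms by auto
    then obtain Y' where "Y' \<in> C (Suc j)" "A \<subseteq> Y'" using coarsens assms(1) by blast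
    then have "Y' = Y" using blocks_overlap[of "Suc j"] assms \<open>x \<in> Y\<close> A(2) by auto
    then show "x \<in> \<Union>{A \<in> C j. A \<subseteq> Y}" using A \<open>A \<subseteq> Y'\<close> by blast
  qed
qed blast

lemma coarsens_upto:
  assumes "j \<le> i" "i \<le> m" "A \<in> C j"
  shows "\<exists>Y\<in>C i. A \<subseteq> Y"
  using assms(1,2)
proof (induction i rule: dec_induct)
  case (step l)
  then obtain Y where "Y \<in> C l" "A \<subseteq> Y" by auto
  moreover obtain Z where "Z \<in> C (Suc l)" "Y \<subseteq> Z"
    using coarsens[of l Y] step.hyps(2) assms(2) calculation(1) by auto
  ultimately show ?case by blast
qed (use assms(3) in blast)

lemma block_persists:
  assumes "j \<le> k" "k \<le> i" "i \<le> m" "A \<in> C j" "A \<in> C i"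
  shows "A \<in> C k"
proof -
  obtain Y where Y: "Y \<in> C k" "A \<subseteq> Y" using coarsens_upto assms by (meson le_trans)
  obtain Z where Z: "Z \<in> C i" "Y \<subseteq> Z" using coarsens_upto[OF assms(2,3) Y(1)] by blast
  have "A \<noteq> {}" using block_nonempty[of j A] assms by simp
  then have "A = Z" using blocks_overlap[OF assms(3,5) Z(1)] Y Z by blast
  then show ?thesis using Y Z by auto
qed

text \<open>Each coarse block that is not already a fine block contains at least two fine blocks;
  hence every new block at level j+1 costs one block of level j.\<close>
lemma count_step:
  assumes "j < m"
  shows "card (C (Suc j)) + card (C (Suc j) - C j) \<le> card (C j)"
proof -
  define parts where "parts Y = {A \<in> C j. A \<subseteq> Y}" for Y
  have finite: "finite (C j)" "finite (C (Suc j))" using blocks_finite assms by auto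
  have parts_ne: "1 \<le> card (parts Y)" if "Y \<in> C (Suc j)" for Y
  proof -
    have "parts Y \<noteq> {}"
      using block_is_union[OF assms that] block_nonempty[of "Suc j" Y] assms that
      unfolding parts_def by auto
    then show ?thesis using finite unfolding parts_def by (simp add: Suc_le_eq card_gt_0_iff)
  qed
  have parts_new: "2 \<le> card (parts Y)" if Y: "Y \<in> C (Suc j) - C j" for Y
  proof (rule ccontr)
    assume "\<not> 2 \<le> card (parts Y)"
    then have "card (parts Y) = 1" using parts_ne Y by fastforce
    then obtain A where A: "parts Y = {A}" by (rule card_1_singletonE)
    have "Y = \<Union>(parts Y)" using block_is_union[OF assms] Y unfolding parts_def by blast
    then have "Y = A" using A by simp
    moreover have "A \<in> C j" using A unfolding parts_def by blast
    ultimately show False using Y by blast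
  qed
  have disjoint: "parts Y \<inter> parts Y' = {}" if "Y \<in> C (Suc j)" "Y' \<in> C (Suc j)" "Y \<noteq> Y'" for Y Y'
    using that blocks_overlap[of "Suc j" Y Y'] block_nonempty[of j] assms
    unfolding parts_def by fastforce
  have "(\<Sum>Y\<in>C (Suc j). card (parts Y)) = card (\<Union>Y\<in>C (Suc j). parts Y)"
    using finite disjoint by (intro card_UN_disjoint[symmetric]) (auto simp: parts_def)
  also have "\<dots> \<le> card (C j)" using finite by (intro card_mono) (auto simp: parts_def)
  finally have total: "(\<Sum>Y\<in>C (Suc j). card (parts Y)) \<le> card (C j)" .
  have "card (C (Suc j)) + card (C (Suc j) - C j)
        = (\<Sum>Y\<in>C (Suc j) \<inter> C j. 1) + (\<Sum>Y\<in>C (Suc j) - C j. 2)"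
    using card_Int_Diff[OF finite(2), of "C j"] by simp
  also have "\<dots> \<le> (\<Sum>Y\<in>C (Suc j) \<inter> C j. card (parts Y)) + (\<Sum>Y\<in>C (Suc j) - C j. card (parts Y))"
    using parts_ne parts_new by (intro add_mono sum_mono) auto
  also have "\<dots> = (\<Sum>Y\<in>C (Suc j). card (parts Y))"
    using sum.Int_Diff[OF finite(2), of "\<lambda>Y. card (parts Y)" "C j"] by (rule sym)
  finally show ?thesis using total by linarith
qed

definition blocks_upto :: "nat \<Rightarrow> 'a set set" where
  "blocks_upto k = {A. \<exists>j\<le>k. A \<in> C j}"

lemma blocks_upto_count: "k \<le> m \<Longrightarrow> card (blocks_upto k) + card (C k) \<le> 2 * card (C 0)"
proof (induction k)
  case 0
  then show ?case by (simp add: blocks_upto_def)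
next
  case (Suc k)
  have "blocks_upto (Suc k) = blocks_upto k \<union> (C (Suc k) - C k)"
    unfolding blocks_upto_def by (auto simp: le_Suc_eq)
  moreover have "finite (blocks_upto k)"
    using blocks_finite Suc.prems unfolding blocks_upto_def by auto
  moreover have "finite (C (Suc k))" using blocks_finite Suc.prems by blast
  ultimately have "card (blocks_upto (Suc k)) \<le> card (blocks_upto k) + card (C (Suc k) - C k)"
    by (simp add: card_Un_le)
  then show ?case using count_step[of k] Suc by simp
qed

lemma card_blocks_upto:
  assumes "V \<noteq> {}"
  shows "card (blocks_upto m) \<le> 2 * card (C 0) - 1"
proof -
  have "C m \<noteq> {}" using partition_onD1[OF partition, of m] assms by auto
  then have "1 \<le> card (C m)" using blocks_finite[of m] by (simp add: Suc_le_eq card_gt_0_iff)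
  then show ?thesis using blocks_upto_count[of m] by simp
qed

definition last_level :: "'a set \<Rightarrow> nat" where
  "last_level A = Max {j. j \<le> m \<and> A \<in> C j}"

lemma last_level:
  assumes "j \<le> m" "A \<in> C j"
  shows "last_level A \<le> m" "A \<in> C (last_level A)" "j \<le> last_level A"
proof -
  have finite: "finite {j. j \<le> m \<and> A \<in> C j}" by simp
  have member: "j \<in> {j. j \<le> m \<and> A \<in> C j}" using assms by simp
  have "last_level A \<in> {j. j \<le> m \<and> A \<in> C j}"
    unfolding last_level_def using Max_in[OF finite] member by blast
  then show "last_level A \<le> m" "A \<in> C (last_level A)" by auto
  show "j \<le> last_level A" unfolding last_level_def using Max_ge[OF finite member] .
qed

lemma related_at_last_level:
  assumes mono: "\<And>j i A B. j \<le> i \<Longrightarrow> R j A B \<Longrightarrow> R i A B"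
    and "j \<le> m" "A \<in> C j" "B \<in> C j" "R j A B" "last_level A \<le> last_level B"
  shows "B \<in> C (last_level A) \<and> R (last_level A) A B"
proof
  show "B \<in> C (last_level A)"
    using block_persists last_level assms(2-4,6) by blast
  show "R (last_level A) A B" using mono last_level(3)[OF assms(2,3)] assms(5) by blast
qed

text \<open>Charging every related pair to the block of the pair that disappears first bounds the
  number of related pairs by the number of blocks times the maximal number of related
  neighbours of a block within one level.\<close>
lemma related_pairs_bound:
  fixes R :: "nat \<Rightarrow> 'a set \<Rightarrow> 'a set \<Rightarrow> bool" and K :: real
  assumes sym: "\<And>j A B. j \<le> m \<Longrightarrow> A \<in> C j \<Longrightarrow> B \<in> C j \<Longrightarrow> R j A B \<Longrightarrow> R j B A"
    and mono: "\<And>j i A B. j \<le> i \<Longrightarrow> R j A B \<Longrightarrow> R i A B"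
    and neighbours: "\<And>j A. j \<le> m \<Longrightarrow> A \<in> C j \<Longrightarrow> real (card {B \<in> C j. B \<noteq> A \<and> R j A B}) \<le> K"
  shows "real (card {{A, B} | A B. A \<noteq> B \<and> (\<exists>j\<le>m. A \<in> C j \<and> B \<in> C j \<and> R j A B)})
           \<le> real (card (blocks_upto m)) * K"
proof -
  define N where "N A = {B \<in> C (last_level A). B \<noteq> A \<and> R (last_level A) A B}" for A
  define pairs where "pairs = {{A, B} | A B. A \<noteq> B \<and> (\<exists>j\<le>m. A \<in> C j \<and> B \<in> C j \<and> R j A B)}"
  have finite_blocks: "finite (blocks_upto m)"
    using blocks_finite unfolding blocks_upto_def by auto
  have finite_N: "finite (N A)" if "A \<in> blocks_upto m" for A
    using that blocks_finite last_level(1) unfolding N_def blocks_upto_def by auto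
  have "pairs \<subseteq> (\<Union>A\<in>blocks_upto m. (\<lambda>B. {A, B}) ` N A)"
  proof
    fix p assume "p \<in> pairs"
    then obtain A B j where p: "p = {A, B}" "A \<noteq> B" "j \<le> m" "A \<in> C j" "B \<in> C j" "R j A B"
      unfolding pairs_def by blast
    have blocks: "A \<in> blocks_upto m" "B \<in> blocks_upto m"
      unfolding blocks_upto_def using p by auto
    show "p \<in> (\<Union>A\<in>blocks_upto m. (\<lambda>B. {A, B}) ` N A)"
    proof (cases "last_level A \<le> last_level B")
      case True
      then have "B \<in> N A"
        using related_at_last_level[where R = R, OF mono p(3-6)] p(2) unfolding N_def by auto
      then show ?thesis using blocks p(1) by blast
    next
      case False
      then have "A \<in> N B"
        using related_at_last_level[where R = R, OF mono p(3,5,4) sym[OF p(3-6)]] p(2) unfolding N_def by auto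
      then show ?thesis using blocks p(1) by (auto simp: insert_commute)
    qed
  qed
  then have "card pairs \<le> card (\<Union>A\<in>blocks_upto m. (\<lambda>B. {A, B}) ` N A)"
    using finite_blocks finite_N by (intro card_mono) auto
  also have "\<dots> \<le> (\<Sum>A\<in>blocks_upto m. card ((\<lambda>B. {A, B}) ` N A))"
    by (rule card_UN_le[OF finite_blocks])
  also have "\<dots> \<le> (\<Sum>A\<in>blocks_upto m. card (N A))"
    using finite_N by (intro sum_mono card_image_le) auto
  finally have "real (card pairs) \<le> (\<Sum>A\<in>blocks_upto m. real (card (N A)))"
    by (metis of_nat_le_iff of_nat_sum)
  also have "\<dots> \<le> (\<Sum>A\<in>blocks_upto m. K)"
    using neighbours last_level unfolding N_def blocks_upto_def by (intro sum_mono) blast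
  finally show ?thesis unfolding pairs_def by simp
qed

end

lemma knows_mono: "r \<le> r' \<Longrightarrow> knows d r A B \<Longrightarrow> knows d r' A B"
  unfolding knows_def by force

lemma knows_sym:
  assumes "metric_on V d" "A \<subseteq> V" "B \<subseteq> V" "knows d r A B"
  shows "knows d r B A"
proof -
  obtain v u where "v \<in> A" "u \<in> B" "d v u < r" using assms(4) unfolding knows_def by blast
  moreover have "d u v = d v u" using metric_sym[OF assms(1)] assms(2,3) calculation by blast
  ultimately show ?thesis unfolding knows_def by (metis)
qed

text \<open>The lower bound on \<tau> is exactly what makes cluster radii grow geometrically: a cluster
  of radius r/2 merged with clusters whose leaders are within \<tau>r/2^\<eta> has radius \<tau>r/2.\<close>
lemma growth_condition:
  fixes \<tau> :: real
  assumes eta: "2 \<le> \<eta>" and tau: "1 + 1 / (2 ^ (\<eta> - 1) - 1) \<le> \<tau>"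
  shows "1 < \<tau>" and "1 / 2 + \<tau> / 2 ^ \<eta> \<le> \<tau> / 2"
proof -
  define h :: real where "h = 2 ^ (\<eta> - 1)"
  have h: "2 \<le> h" unfolding h_def using power_increasing[of 1 "\<eta> - 1" "2::real"] eta by auto
  have two_pow: "(2::real) ^ \<eta> = 2 * h"
    unfolding h_def using eta by (cases \<eta>) simp_all
  have "0 < 1 / (h - 1)" using h by simp
  then show "1 < \<tau>" using tau unfolding h_def[symmetric] by linarith
  have "h = (1 + 1 / (h - 1)) * (h - 1)" using h by (simp add: field_simps)
  also have "\<dots> \<le> \<tau> * (h - 1)" using tau h unfolding h_def[symmetric] by (intro mult_right_mono) auto
  finally show "1 / 2 + \<tau> / 2 ^ \<eta> \<le> \<tau> / 2" unfolding two_pow using h by (simp add: field_simps)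
qed

locale hierarchy = doubling_metric V d lam
  for V :: "'a set" and d :: "'a \<Rightarrow> 'a \<Rightarrow> real" and lam :: real +
  fixes \<eta> :: nat and \<tau> r0 :: real and S :: "nat \<Rightarrow> ('a set \<times> 'a) set" and m :: nat
  assumes eta: "2 \<le> \<eta>" and tau: "1 + 1 / (2 ^ (\<eta> - 1) - 1) \<le> \<tau>"
    and r0_pos: "0 < r0" and r0_sep: "\<forall>u\<in>V. \<forall>v\<in>V. u \<noteq> v \<longrightarrow> r0 < d u v"
    and run: "hier_run d \<eta> \<tau> V r0 S m"
begin

abbreviation radius :: "nat \<Rightarrow> real" where
  "radius j \<equiv> \<tau> ^ j * r0"

lemma radius_pos: "0 < radius j"
  using growth_condition(1)[OF eta tau] r0_pos by simp

lemma radius_mono: "j \<le> i \<Longrightarrow> radius j \<le> radius i"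
  using growth_condition(1)[OF eta tau] r0_pos by (intro mult_right_mono power_increasing) auto

text \<open>Merging clusters of radius r_j/2 whose leaders lie within r_(j+1)/2^\<eta> of a new leader
  gives a cluster of radius r_(j+1)/2.\<close>
lemma radius_step: "radius j / 2 + radius (Suc j) / 2 ^ \<eta> \<le> radius (Suc j) / 2"
proof -
  have "radius j * (1 / 2 + \<tau> / 2 ^ \<eta>) \<le> radius j * (\<tau> / 2)"
    using growth_condition(2)[OF eta tau] radius_pos[of j] by (intro mult_left_mono) auto
  then show ?thesis by (simp add: field_simps)
qed

definition merge :: "nat \<Rightarrow> 'a set \<Rightarrow> 'a set" where
  "merge j P = \<Union>{A. \<exists>l\<in>P. (A, l) \<in> S j}"

lemma level_0: "S 0 = (\<lambda>v. ({v}, v)) ` V"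
  using run unfolding hier_run_def by blast

lemma level_Suc:
  assumes "j < m"
  obtains Ps where "greedy_part d \<eta> (2 * radius (Suc j)) (snd ` S j) Ps"
    and "S (Suc j) = (\<lambda>(P, v). (merge j P, v)) ` set Ps"
  using run assms unfolding hier_run_def merge_def by blast

definition level_ok :: "nat \<Rightarrow> bool" where
  "level_ok j \<longleftrightarrow>
     (\<forall>A l. (A, l) \<in> S j \<longrightarrow> l \<in> A \<and> A \<subseteq> V \<and> (\<forall>x\<in>A. d x l \<le> radius j / 2)) \<and>
     (\<forall>A l A' l'. (A, l) \<in> S j \<longrightarrow> (A', l') \<in> S j \<longrightarrow> A \<inter> A' \<noteq> {} \<longrightarrow> A = A' \<and> l = l') \<and>
     \<Union>(fst ` S j) = V \<and>
     (\<forall>A l A' l'. (A, l) \<in> S j \<longrightarrow> (A', l') \<in> S j \<longrightarrow> l \<noteq> l' \<longrightarrow> radius j / 2 ^ \<eta> \<le> d l l')"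

text \<open>At level 0 the clusters are singletons, and distinct points are more than r_0 apart.\<close>
lemma level_ok_0: "level_ok 0"
proof -
  have "r0 / 2 ^ \<eta> \<le> r0" using r0_pos by (simp add: divide_le_eq)
  then show ?thesis
    unfolding level_ok_def level_0 using r0_pos r0_sep metric_zero[OF metric] by fastforce
qed

lemma cluster:
  "level_ok j \<Longrightarrow> (A, l) \<in> S j \<Longrightarrow> l \<in> A \<and> A \<subseteq> V \<and> (\<forall>x\<in>A. d x l \<le> radius j / 2)"
  unfolding level_ok_def by blast

lemma cluster_overlap:
  "level_ok j \<Longrightarrow> (A, l) \<in> S j \<Longrightarrow> (A', l') \<in> S j \<Longrightarrow> A \<inter> A' \<noteq> {} \<Longrightarrow> A = A' \<and> l = l'"
  unfolding level_ok_def by blast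

lemma clusters_cover: "level_ok j \<Longrightarrow> \<Union>(fst ` S j) = V"
  unfolding level_ok_def by blast

lemma leaders_separated:
  "level_ok j \<Longrightarrow> (A, l) \<in> S j \<Longrightarrow> (A', l') \<in> S j \<Longrightarrow> l \<noteq> l' \<Longrightarrow> radius j / 2 ^ \<eta> \<le> d l l'"
  unfolding level_ok_def by blast

context
  fixes j :: nat and Ps :: "('a set \<times> 'a) list"
  assumes ok: "level_ok j"
    and greedy: "greedy_part d \<eta> (2 * radius (Suc j)) (snd ` S j) Ps"
    and next_level: "S (Suc j) = (\<lambda>(P, v). (merge j P, v)) ` set Ps"
begin

lemma leaders_in_V: "snd ` S j \<subseteq> V"
  using cluster[OF ok] by force

text \<open>The greedy partition of the leaders, with its radius 2r_(j+1)/2^(\<eta>+1) = r_(j+1)/2^\<eta>.\<close>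
lemma greedy_block:
  assumes "(P, v) \<in> set Ps"
  shows "v \<in> P \<and> P \<subseteq> snd ` S j \<and> (\<forall>u\<in>P. d u v < radius (Suc j) / 2 ^ \<eta>)"
proof -
  have "0 < 2 * radius (Suc j)" using radius_pos[of "Suc j"] by linarith
  from greedy_part_block[OF greedy metric leaders_in_V this assms]
  show ?thesis by simp
qed

lemma greedy_block_separated:
  assumes "(P, v) \<in> set Ps" "(P', v') \<in> set Ps" "(P, v) \<noteq> (P', v')"
  shows "P \<inter> P' = {} \<and> radius (Suc j) / 2 ^ \<eta> \<le> d v v'"
proof -
  have "0 < 2 * radius (Suc j)" using radius_pos[of "Suc j"] by linarith
  from greedy_part_separated[OF greedy metric leaders_in_V this assms]
  show ?thesis by simp
qed

lemma next_cluster: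
  assumes "(B, l) \<in> S (Suc j)"
  shows "l \<in> B \<and> B \<subseteq> V \<and> (\<forall>x\<in>B. d x l \<le> radius (Suc j) / 2)"
proof -
  obtain P where P: "(P, l) \<in> set Ps" "B = merge j P" using assms next_level by auto
  obtain A where A: "(A, l) \<in> S j" using greedy_block[OF P(1)] by force
  have "l \<in> B" using A cluster[OF ok A] greedy_block[OF P(1)] unfolding P(2) merge_def by blast
  moreover have "B \<subseteq> V" unfolding P(2) merge_def using cluster[OF ok] by blast
  moreover have "d x l \<le> radius (Suc j) / 2" if "x \<in> B" for x
  proof -
    obtain A' l' where A': "(A', l') \<in> S j" "l' \<in> P" "x \<in> A'"
      using \<open>x \<in> B\<close> unfolding P(2) merge_def by blast
    have "x \<in> V" "l' \<in> V" "l \<in> V" using cluster[OF ok A'(1)] \<open>l \<in> B\<close> \<open>B \<subseteq> V\<close> A'(3) by blast+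
    then have "d x l \<le> d x l' + d l' l" using metric_triangle[OF metric] by blast
    also have "\<dots> \<le> radius j / 2 + radius (Suc j) / 2 ^ \<eta>"
      using cluster[OF ok A'(1)] A'(3) greedy_block[OF P(1)] A'(2) by (intro add_mono) auto
    also have "\<dots> \<le> radius (Suc j) / 2" by (rule radius_step)
    finally show ?thesis .
  qed
  ultimately show ?thesis by blast
qed

text \<open>Merged clusters are disjoint because the greedy parts and the old clusters are.\<close>
lemma next_overlap:
  assumes "(B, l) \<in> S (Suc j)" "(B', l') \<in> S (Suc j)" "B \<inter> B' \<noteq> {}"
  shows "B = B' \<and> l = l'"
proof -
  obtain P where P: "(P, l) \<in> set Ps" "B = merge j P" using assms(1) next_level by auto
  obtain P' where P': "(P', l') \<in> set Ps" "B' = merge j P'" using assms(2) next_level by auto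
  show ?thesis
  proof (cases "(P, l) = (P', l')")
    case False
    then have disjoint: "P \<inter> P' = {}" using greedy_block_separated[OF P(1) P'(1)] by blast
    obtain x where "x \<in> B" "x \<in> B'" using assms(3) by blast
    then obtain A1 l1 A2 l2 where
      "(A1, l1) \<in> S j" "l1 \<in> P" "x \<in> A1" "(A2, l2) \<in> S j" "l2 \<in> P'" "x \<in> A2"
      unfolding P(2) P'(2) merge_def by blast
    then have "l1 = l2" using cluster_overlap[OF ok] by blast
    then show ?thesis using disjoint \<open>l1 \<in> P\<close> \<open>l2 \<in> P'\<close> by blast
  qed (use P P' in simp)
qed

text \<open>Every cluster of level j is contained in a merged cluster, namely the one of the greedy
  part containing its leader.\<close>
lemma coarsens_step:
  assumes "(A, l) \<in> S j"
  shows "\<exists>(B, v) \<in> S (Suc j). A \<subseteq> B"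
proof -
  have "l \<in> \<Union>(fst ` set Ps)" using greedy_part_union[OF greedy] assms by force
  then obtain P v where "(P, v) \<in> set Ps" "l \<in> P" by auto
  then show ?thesis using assms next_level unfolding merge_def by fastforce
qed

lemma next_cover: "\<Union>(fst ` S (Suc j)) = V"
proof
  show "\<Union>(fst ` S (Suc j)) \<subseteq> V" using next_cluster by force
  show "V \<subseteq> \<Union>(fst ` S (Suc j))"
  proof
    fix x assume "x \<in> V"
    then obtain A l where "(A, l) \<in> S j" "x \<in> A" using clusters_cover[OF ok] by force
    then show "x \<in> \<Union>(fst ` S (Suc j))" using coarsens_step by force
  qed
qed

lemma next_separated:
  "(B, l) \<in> S (Suc j) \<Longrightarrow> (B', l') \<in> S (Suc j) \<Longrightarrow> l \<noteq> l' \<Longrightarrow> radius (Suc j) / 2 ^ \<eta> \<le> d l l'"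
  using greedy_block_separated next_level by fastforce

lemma level_ok_next: "level_ok (Suc j)"
  unfolding level_ok_def using next_cluster next_overlap next_cover next_separated by blast

end

lemma level_ok: "j \<le> m \<Longrightarrow> level_ok j"
proof (induction j)
  case (Suc j)
  then obtain Ps where "greedy_part d \<eta> (2 * radius (Suc j)) (snd ` S j) Ps"
    "S (Suc j) = (\<lambda>(P, v). (merge j P, v)) ` set Ps"
    using level_Suc by (metis Suc_le_eq)
  then show ?case using level_ok_next Suc by simp
qed (rule level_ok_0)

lemma partition_level:
  assumes "j \<le> m" shows "partition_on V (fst ` S j)"
proof (rule partition_onI)
  have ok: "level_ok j" using level_ok assms .
  show "\<Union>(fst ` S j) = V" using clusters_cover[OF ok] .
  show "disjnt A B" if "A \<in> fst ` S j" "B \<in> fst ` S j" "A \<noteq> B" for A B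
    using that cluster_overlap[OF ok] unfolding disjnt_def by force
  show "{} \<notin> fst ` S j" using cluster[OF ok] by force
qed

sublocale chain: coarsening_chain V "\<lambda>j. fst ` S j" m
proof
  show "finite V" by (rule finite_V)
  show "partition_on V (fst ` S j)" if "j \<le> m" for j using partition_level that .
  show "\<exists>Y\<in>fst ` S (Suc j). A \<subseteq> Y" if j: "j < m" and A: "A \<in> fst ` S j" for j A
  proof -
    obtain l where l: "(A, l) \<in> S j" using A by force
    obtain Ps where "greedy_part d \<eta> (2 * radius (Suc j)) (snd ` S j) Ps"
      "S (Suc j) = (\<lambda>(P, v). (merge j P, v)) ` set Ps"
      using level_Suc[OF j] by blast
    from coarsens_step[OF level_ok this l] j show ?thesis by force
  qed
qed

lemma level_finite: "j \<le> m \<Longrightarrow> finite (S j)"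
  using cluster[OF level_ok] finite_V
  by (intro finite_subset[of "S j" "Pow V \<times> V"]) auto

lemma leader_determines_cluster:
  assumes ok: "level_ok j" shows "inj_on snd (S j)"
proof (rule inj_onI)
  fix x y assume xy: "x \<in> S j" "y \<in> S j" "snd x = snd y"
  obtain B l B' l' where x: "x = (B, l)" and y: "y = (B', l')" by fastforce
  have "l \<in> B \<inter> B'" using cluster[OF ok] xy unfolding x y by auto
  then show "x = y" using cluster_overlap[OF ok] xy unfolding x y by blast
qed

text \<open>Packing bound: the leaders of the clusters known by A lie within distance 2r_j of the
  leader of A and are r_j/2^\<eta> apart, so by the doubling property there are at most
  \<lambda>^(\<eta>+2) of them.\<close>
lemma neighbour_bound:
  assumes j: "j \<le> m" and A: "A \<in> fst ` S j"
  shows "real (card {B \<in> fst ` S j. B \<noteq> A \<and> knows d (radius j) A B}) \<le> lam ^ (\<eta> + 2)"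
proof -
  have ok: "level_ok j" using level_ok j .
  define r where "r = radius j"
  define \<rho> where "\<rho> = r / 2 ^ (\<eta> + 1)"
  define N where "N = {B \<in> fst ` S j. B \<noteq> A \<and> knows d r A B}"
  define leaders where "leaders = {(B, l) \<in> S j. B \<in> N}"
  obtain a where a: "(A, a) \<in> S j" using A by force
  have a_V: "a \<in> V" using cluster[OF ok a] by blast
  have leaders_sub: "leaders \<subseteq> S j" unfolding leaders_def by auto
  have finite: "finite leaders" using level_finite[OF j] leaders_sub by (rule finite_subset[rotated])
  have "card N \<le> card leaders"
  proof -
    have "N = fst ` leaders" unfolding leaders_def N_def by force
    then show ?thesis using card_image_le[OF finite] by simp
  qed
  also have "card leaders = card (snd ` leaders)"
    using inj_on_subset[OF leader_determines_cluster[OF ok] leaders_sub] by (rule card_image[symmetric])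
  finally have card_N: "card N \<le> card (snd ` leaders)" .
  have near: "snd ` leaders \<subseteq> ball_on V d a (2 ^ (\<eta> + 2) * \<rho>)"
  proof
    fix q assume "q \<in> snd ` leaders"
    then obtain B where "(B, q) \<in> leaders" by force
    then have B: "(B, q) \<in> S j" "knows d r A B" unfolding leaders_def N_def by auto
    obtain v u where vu: "v \<in> A" "u \<in> B" "d v u < r" using B(2) unfolding knows_def by blast
    have in_V: "q \<in> V" "u \<in> V" "v \<in> V" using cluster[OF ok] B(1) a vu by blast+
    have "d q a \<le> d q u + d u v + d v a"
      using metric_triangle[OF metric, of q u a] metric_triangle[OF metric, of u v a] in_V a_V
      by linarith
    also have "\<dots> = d u q + d v u + d v a" using metric_sym[OF metric] in_V by simp
    also have "\<dots> < r / 2 + r + r / 2"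
      using cluster[OF ok B(1)] cluster[OF ok a] vu unfolding r_def
      by (intro add_less_le_mono add_le_less_mono) auto
    also have "\<dots> = 2 ^ (\<eta> + 2) * \<rho>" unfolding \<rho>_def by (simp add: power_add)
    finally show "q \<in> ball_on V d a (2 ^ (\<eta> + 2) * \<rho>)" using in_V unfolding ball_on_def by blast
  qed
  have apart: "\<forall>q\<in>snd ` leaders. \<forall>q'\<in>snd ` leaders. q \<noteq> q' \<longrightarrow> 2 * \<rho> \<le> d q q'"
    using leaders_separated[OF ok] unfolding leaders_def \<rho>_def r_def by force
  have "0 < \<rho>" unfolding \<rho>_def r_def using radius_pos by simp
  from packing[OF a_V this near apart] card_N show ?thesis unfolding N_def r_def by simp
qed

end

text \<open>The theorem: the chain has at most 2n-1 blocks since S_0 has n blocks, and each block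
  knows at most \<lambda>^(\<eta>+2) \<le> \<lambda>^(\<eta>+3) blocks per level.\<close>
theorem corollary1:
  fixes V :: "'a set" and d :: "'a \<Rightarrow> 'a \<Rightarrow> real" and lam \<tau> r0 :: real
    and \<eta> n m :: nat and S :: "nat \<Rightarrow> ('a set \<times> 'a) set"
  assumes "finite V" and "card V = n" and "n \<ge> 2"
    and "metric_on V d" and "doubling V d lam"
    and "\<eta> \<ge> 2"
    and "1 + 1 / (2 ^ (\<eta> - 1) - 1) \<le> \<tau>" and "\<tau> \<le> 2 ^ \<eta>"
    and "0 < r0" and "\<forall>u\<in>V. \<forall>v\<in>V. u \<noteq> v \<longrightarrow> r0 < d u v"
    and "hier_run d \<eta> \<tau> V r0 S m"
  shows "card {A. \<exists>j\<le>m. A \<in> fst ` S j} \<le> 2 * n - 1 \<and>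
         real (card {{A, B} | A B. A \<noteq> B \<and>
             (\<exists>j\<le>m. A \<in> fst ` S j \<and> B \<in> fst ` S j \<and> knows d (\<tau> ^ j * r0) A B)})
           \<le> real (2 * n - 1) * lam ^ (3 + \<eta>)"
proof -
  interpret hierarchy V d lam \<eta> \<tau> r0 S m
    using assms by unfold_locales auto
  have nonempty: "V \<noteq> {}" using assms(2,3) by auto
  have "card (fst ` S 0) = n" using assms(2) by (simp add: level_0 image_image card_image)
  then have blocks: "card {A. \<exists>j\<le>m. A \<in> fst ` S j} \<le> 2 * n - 1"
    using chain.card_blocks_upto[OF nonempty] unfolding chain.blocks_upto_def by simp
  have "real (card {{A, B} | A B. A \<noteq> B \<and>
             (\<exists>j\<le>m. A \<in> fst ` S j \<and> B \<in> fst ` S j \<and> knows d (radius j) A B)})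
        \<le> real (card (chain.blocks_upto m)) * lam ^ (\<eta> + 2)"
  proof (rule chain.related_pairs_bound[where R = "\<lambda>j. knows d (radius j)"])
    show "knows d (radius j) B A"
      if "j \<le> m" "A \<in> fst ` S j" "B \<in> fst ` S j" "knows d (radius j) A B" for j A B
      using knows_sym[OF metric chain.block_subset chain.block_subset] that by blast
    show "knows d (radius i) A B" if "j \<le> i" "knows d (radius j) A B" for j i A B
      using knows_mono[OF radius_mono] that .
  qed (rule neighbour_bound)
  also have "\<dots> \<le> real (2 * n - 1) * lam ^ (3 + \<eta>)"
    using blocks lam_ge_1[OF nonempty] unfolding chain.blocks_upto_def
    by (intro mult_mono power_increasing) auto
  finally show ?thesis using blocks by simp
qed

end
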